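(* Let $g=\begin{pmatrix}a&b\\c&d\end{pmatrix}\in\mathrm{SL}_2(\mathbb R)$ with $g\notin s$. Then $g\in S$ if and only if $|ad|+|bc|=1$. If $g\notin S$, then there exist uniquely determined $y_1,y_2>0$, $\delta_1,\delta_2\in\{0,1\}$, $v>0$ and a sign $\pm$ such that $$g=\pm\begin{pmatrix}y_1^{1/2}&0\\0&y_1^{-1/2}\end{pmatrix}\omega^{\delta_1}\begin{pmatrix}\cosh v&\sinh v\\ \sinh v&\cosh v\end{pmatrix}\omega^{\delta_2}\begin{pmatrix}y_2^{1/2}&0\\0&y_2^{-1/2}\end{pmatrix},$$ and concretely $y_1=|ab/(cd)|^{1/2}$, $y_2=|ac/(bd)|^{1/2}$, $v=\log(|ad|^{1/2}+|cb|^{1/2})$, and $(\delta_1,\delta_2)=(0,0),(1,1),(1,0),(0,1)$ according as the sign pattern of $(a,b,c,d)$ is $\pm(+,+,+,+)$, $\pm(+,-,-,+)$, $\pm(+,+,-,-)$, $\pm(+,-,+,-)$ respectively.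
   Context: $\omega=\begin{pmatrix}0&-1\\1&0\end{pmatrix}$. $s=\{g\in\mathrm{SL}_2(\mathbb R): gz_1=z_2\text{ for some }z_1,z_2\in\{0,i\infty\}\}$, which equals $\{g: abcd=0\}$; $S=s\cup\{g\in\mathrm{SL}_2(\mathbb R): g(iy_1)=iy_2\text{ for some }y_1,y_2>0\}$. *)

theory Defs
  imports "HOL-Analysis.Analysis"
begin

type_synonym mat2 = "real^2^2"

definition ent_a :: "mat2 \<Rightarrow> real" where "ent_a g = g $ 1 $ 1"
definition ent_b :: "mat2 \<Rightarrow> real" where "ent_b g = g $ 1 $ 2"
definition ent_c :: "mat2 \<Rightarrow> real" where "ent_c g = g $ 2 $ 1"
definition ent_d :: "mat2 \<Rightarrow> real" where "ent_d g = g $ 2 $ 2"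

definition mk2 :: "real \<Rightarrow> real \<Rightarrow> real \<Rightarrow> real \<Rightarrow> mat2" where
  "mk2 a b c d = vector [vector [a, b], vector [c, d]]"

definition SL2R :: "mat2 set" where "SL2R = {g. det g = 1}"

definition omega :: mat2 where "omega = mk2 0 (-1) 1 0"

definition omega_pow :: "nat \<Rightarrow> mat2" where
  "omega_pow \<delta> = (if \<delta> = 0 then mat 1 else omega)"

definition diag_y :: "real \<Rightarrow> mat2" where
  "diag_y y = mk2 (sqrt y) 0 0 (1 / sqrt y)"

definition hyp_rot :: "real \<Rightarrow> mat2" where
  "hyp_rot v = mk2 (cosh v) (sinh v) (sinh v) (cosh v)"

text \<open>Moebius action on the extended plane; None stands for the cusp i\<infinity>.\<close>
definition moeb :: "mat2 \<Rightarrow> complex option \<Rightarrow> complex option" where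
  "moeb g z = (case z of
      None \<Rightarrow> (if ent_c g = 0 then None else Some (of_real (ent_a g) / of_real (ent_c g)))
    | Some w \<Rightarrow> (if of_real (ent_c g) * w + of_real (ent_d g) = 0 then None
                 else Some ((of_real (ent_a g) * w + of_real (ent_b g)) /
                            (of_real (ent_c g) * w + of_real (ent_d g)))))"

definition small_s :: "mat2 set" where
  "small_s = {g \<in> SL2R. \<exists>z1 \<in> {Some 0, None}. \<exists>z2 \<in> {Some 0, None}. moeb g z1 = z2}"

definition big_S :: "mat2 set" where
  "big_S = small_s \<union> {g \<in> SL2R. \<exists>y1>0. \<exists>y2>0.
      moeb g (Some (\<i> * of_real y1)) = Some (\<i> * of_real y2)}"

definition decomp :: "mat2 \<Rightarrow> real \<Rightarrow> real \<Rightarrow> nat \<Rightarrow> nat \<Rightarrow> real \<Rightarrow> real \<Rightarrow> bool" where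
  "decomp g y1 y2 \<delta>1 \<delta>2 v \<sigma> \<longleftrightarrow>
     y1 > 0 \<and> y2 > 0 \<and> \<delta>1 \<in> {0,1} \<and> \<delta>2 \<in> {0,1} \<and> v > 0 \<and> \<sigma> \<in> {1, -1} \<and>
     g = \<sigma> *\<^sub>R (diag_y y1 ** omega_pow \<delta>1 ** hyp_rot v ** omega_pow \<delta>2 ** diag_y y2)"

end

theory Submission
  imports Defs
begin

text \<open>
  A zero entry of \<open>g\<close> makes \<open>g\<close> move one of \<open>0, i\<infinity>\<close> to the other or fix it, so off \<open>s\<close> all
  entries are nonzero. Then \<open>g(iy\<^sub>1) = iy\<^sub>2\<close> means \<open>b = -y\<^sub>2cy\<^sub>1\<close> and \<open>ay\<^sub>1 = y\<^sub>2d\<close>, which has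
  positive solutions iff \<open>ad > 0 > bc\<close>; since \<open>ad - bc = 1\<close> this is \<open>|ad| + |bc| = 1\<close>.

  Otherwise \<open>ad\<close> and \<open>bc\<close> have the same sign. Up to the signs contributed by \<open>\<plusminus>\<close> and the
  factors \<open>\<omega>\<close>, the product in the decomposition is
  \<open>diag(y\<^sub>1) [p q; q p] diag(y\<^sub>2)\<close> with \<open>{p, q} = {cosh v, sinh v}\<close>, and the map
  \<open>(y\<^sub>1, y\<^sub>2, p, q) \<mapsto> (|a|, |b|, |c|, |d|)\<close> is a bijection of positive quadruples, whose
  inverse gives the stated formulas with \<open>p + q = e\<^sup>v\<close>. The signs of the entries then determine
  \<open>\<delta>\<^sub>1\<close>, \<open>\<delta>\<^sub>2\<close> and \<open>\<plusminus>\<close>, and conversely every sign pattern with \<open>abcd > 0\<close> is realised.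
\<close>

lemma mk2_nth [simp]:
  "mk2 a b c d $ 1 $ 1 = a" "mk2 a b c d $ 1 $ 2 = b"
  "mk2 a b c d $ 2 $ 1 = c" "mk2 a b c d $ 2 $ 2 = d"
  by (simp_all add: mk2_def)

lemma mat2_eq_iff:
  "(A :: mat2) = B \<longleftrightarrow> A$1$1 = B$1$1 \<and> A$1$2 = B$1$2 \<and> A$2$1 = B$2$1 \<and> A$2$2 = B$2$2"
  by (auto simp: vec_eq_iff forall_2)

lemma mk2_eq_iff [simp]:
  "mk2 a b c d = mk2 a' b' c' d' \<longleftrightarrow> a = a' \<and> b = b' \<and> c = c' \<and> d = d'"
  by (simp add: mat2_eq_iff)

lemma mk2_ent: "g = mk2 (ent_a g) (ent_b g) (ent_c g) (ent_d g)"
  by (simp add: mat2_eq_iff ent_a_def ent_b_def ent_c_def ent_d_def)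

lemma mk2_mult:
  "mk2 a b c d ** mk2 a' b' c' d' =
     mk2 (a*a' + b*c') (a*b' + b*d') (c*a' + d*c') (c*b' + d*d')"
  by (simp add: mat2_eq_iff matrix_matrix_mult_def sum_2)

lemma scaleR_mk2: "s *\<^sub>R mk2 a b c d = mk2 (s*a) (s*b) (s*c) (s*d)"
  by (simp add: mat2_eq_iff)

lemma det_mk2: "det (mk2 a b c d) = a*d - b*c"
  by (simp add: det_2)

lemma mat_1_mk2: "(mat 1 :: mat2) = mk2 1 0 0 1"
  by (simp add: mat2_eq_iff mat_def)

lemma small_s_iff:
  "g \<in> small_s \<longleftrightarrow> g \<in> SL2R \<and> ent_a g * ent_b g * ent_c g * ent_d g = 0"
  by (auto simp: small_s_def moeb_def split: if_splits)

lemma moeb_imag_axis_iff: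
  assumes "ent_d g \<noteq> 0"
  shows "moeb g (Some (\<i> * of_real y1)) = Some (\<i> * of_real y2) \<longleftrightarrow>
    ent_b g = - y2 * ent_c g * y1 \<and> ent_a g * y1 = y2 * ent_d g"
proof -
  let ?num = "of_real (ent_a g) * (\<i> * of_real y1) + of_real (ent_b g) :: complex"
  let ?den = "of_real (ent_c g) * (\<i> * of_real y1) + of_real (ent_d g) :: complex"
  have "?den \<noteq> 0" using assms by (simp add: complex_eq_iff)
  then have "moeb g (Some (\<i> * of_real y1)) = Some (\<i> * of_real y2) \<longleftrightarrow> ?num = \<i> * of_real y2 * ?den"
    by (simp add: moeb_def field_simps)
  also have "\<dots> \<longleftrightarrow> ent_b g = - y2 * ent_c g * y1 \<and> ent_a g * y1 = y2 * ent_d g"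
    by (simp add: complex_eq_iff algebra_simps)
  finally show ?thesis .
qed

lemma imag_axis_solvable_iff:
  fixes a b c d :: real
  assumes "c \<noteq> 0" "d \<noteq> 0"
  shows "(\<exists>y1>0. \<exists>y2>0. b = - y2 * c * y1 \<and> a * y1 = y2 * d) \<longleftrightarrow> 0 < a*d \<and> b*c < 0"
proof
  assume "\<exists>y1>0. \<exists>y2>0. b = - y2 * c * y1 \<and> a * y1 = y2 * d"
  then obtain y1 y2 where y: "y1 > 0" "y2 > 0" "b = - y2 * c * y1" "a = y2 * d / y1"
    by (auto simp: field_simps)
  then have "a*d = y2 * d^2 / y1" "b*c = - (y2 * c^2 * y1)" by (simp_all add: power2_eq_square)
  moreover have "0 < d^2" "0 < c^2" using assms by simp_all
  ultimately show "0 < a*d \<and> b*c < 0" using y(1,2) by simp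
next
  assume ad_bc: "0 < a*d \<and> b*c < 0"
  then have "a \<noteq> 0" by auto
  then have "-(b*d)/(a*c) = -((a*d)*(b*c))/(a*c)^2" using assms by (simp add: field_simps power2_eq_square)
  moreover have "0 < -((a*d)*(b*c))" "0 < (a*c)^2" using ad_bc assms \<open>a \<noteq> 0\<close> by (simp_all add: mult_pos_neg)
  ultimately have "0 < -(b*d)/(a*c)" by (metis divide_pos_pos)
  define y1 where "y1 = sqrt (-(b*d)/(a*c))"
  define y2 where "y2 = a * y1 / d"
  have "y1 > 0" "y1^2 = -(b*d)/(a*c)" using \<open>0 < -(b*d)/(a*c)\<close> by (simp_all add: y1_def)
  moreover have "y2 > 0"
    using ad_bc \<open>y1 > 0\<close> by (auto simp: y2_def zero_less_divide_iff zero_less_mult_iff mult_less_0_iff)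
  moreover have "b = - y2 * c * y1" "a * y1 = y2 * d"
    using assms \<open>a \<noteq> 0\<close> \<open>y1^2 = -(b*d)/(a*c)\<close> by (auto simp: y2_def field_simps power2_eq_square)
  ultimately show "\<exists>y1>0. \<exists>y2>0. b = - y2 * c * y1 \<and> a * y1 = y2 * d" by blast
qed

lemma big_S_iff:
  assumes "g \<in> SL2R" "g \<notin> small_s"
  shows "g \<in> big_S \<longleftrightarrow> 0 < ent_a g * ent_d g \<and> ent_b g * ent_c g < 0"
proof -
  have "ent_c g \<noteq> 0" "ent_d g \<noteq> 0" using assms by (auto simp: small_s_iff)
  then show ?thesis
    using assms imag_axis_solvable_iff[of "ent_c g" "ent_d g" "ent_b g" "ent_a g"]
    by (simp add: big_S_def moeb_imag_axis_iff)
qed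

lemma abs_add_abs_eq_diff_iff:
  fixes x y :: "'a :: linordered_idom"
  shows "\<bar>x\<bar> + \<bar>y\<bar> = x - y \<longleftrightarrow> 0 \<le> x \<and> y \<le> 0"
  by (auto simp: abs_if)

lemma diag_y_conj:
  assumes "y1 > 0" "y2 > 0"
  shows "diag_y y1 ** mk2 a b c d ** diag_y y2 =
    mk2 (sqrt y1 * sqrt y2 * a) (sqrt y1 / sqrt y2 * b) (sqrt y2 / sqrt y1 * c) (d / (sqrt y1 * sqrt y2))"
  using assms by (simp add: diag_y_def mk2_mult field_simps)

lemma omega_pow_hyp_rot_omega_pow:
  assumes "\<delta>1 \<in> {0,1}" "\<delta>2 \<in> {0,1}"
    and "(p, q) = (if \<delta>1 = \<delta>2 then (cosh v, sinh v) else (sinh v, cosh v))"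
  shows "omega_pow \<delta>1 ** hyp_rot v ** omega_pow \<delta>2 =
    mk2 ((-1)^\<delta>1 * p) ((-1)^(\<delta>1+\<delta>2) * q) q ((-1)^\<delta>2 * p)"
  using assms by (auto simp: omega_pow_def omega_def hyp_rot_def mat_1_mk2 mk2_mult)

lemma decomp_product:
  assumes y: "y1 > 0" "y2 > 0" and "\<delta>1 \<in> {0,1}" "\<delta>2 \<in> {0,1}"
    and pq: "(p, q) = (if \<delta>1 = \<delta>2 then (cosh v, sinh v) else (sinh v, cosh v))"
    and ABCD: "diag_y y1 ** mk2 p q q p ** diag_y y2 = mk2 A B C D"
  shows "\<sigma> *\<^sub>R (diag_y y1 ** omega_pow \<delta>1 ** hyp_rot v ** omega_pow \<delta>2 ** diag_y y2) =
    mk2 (\<sigma> * (-1)^\<delta>1 * A) (\<sigma> * (-1)^(\<delta>1+\<delta>2) * B) (\<sigma> * C) (\<sigma> * (-1)^\<delta>2 * D)"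
proof -
  have "diag_y y1 ** omega_pow \<delta>1 ** hyp_rot v ** omega_pow \<delta>2 ** diag_y y2 =
      diag_y y1 ** (omega_pow \<delta>1 ** hyp_rot v ** omega_pow \<delta>2) ** diag_y y2"
    by (simp add: matrix_mul_assoc)
  then show ?thesis
    using ABCD[symmetric] omega_pow_hyp_rot_omega_pow[OF assms(3-5)] y
    by (simp add: diag_y_conj scaleR_mk2)
qed

lemma diag_conj_eq_iff:
  fixes a b c d y1 y2 p q :: real
  assumes pos: "a > 0" "b > 0" "c > 0" "d > 0" "y1 > 0" "y2 > 0" "p > 0" "q > 0"
  shows "diag_y y1 ** mk2 p q q p ** diag_y y2 = mk2 a b c d \<longleftrightarrow>
    y1 = sqrt (a*b/(c*d)) \<and> y2 = sqrt (a*c/(b*d)) \<and> p = sqrt (a*d) \<and> q = sqrt (b*c)"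
    (is "?lhs \<longleftrightarrow> ?rhs")
proof -
  have "?lhs \<longleftrightarrow> a = sqrt y1 * sqrt y2 * p \<and> b = sqrt y1 / sqrt y2 * q \<and>
      c = sqrt y2 / sqrt y1 * q \<and> d = p / (sqrt y1 * sqrt y2)"
    (is "_ \<longleftrightarrow> ?entries") using pos by (auto simp: diag_y_conj)
  also have "\<dots> \<longleftrightarrow> ?rhs"
  proof
    assume ?rhs
    moreover have "sqrt x ^ 4 = x^2" if "x \<ge> 0" for x :: real
      using that power_mult[of "sqrt x" 2 2] by simp
    ultimately have fourth: "sqrt y1 ^ 4 = a*b/(c*d)" "sqrt y2 ^ 4 = a*c/(b*d)"
        "p ^ 4 = (a*d)^2" "q ^ 4 = (b*c)^2"
      using pos by simp_all
    have eq4: "x = y" if "x^4 = y^4" "x > 0" "y > 0" for x y :: real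
      using that by (simp add: power_eq_iff_eq_base)
    have h4: "a^4 = (sqrt y1 * sqrt y2 * p)^4" "b^4 = (sqrt y1 / sqrt y2 * q)^4"
      "c^4 = (sqrt y2 / sqrt y1 * q)^4" "d^4 = (p / (sqrt y1 * sqrt y2))^4"
      unfolding power_mult_distrib power_divide fourth using pos
      by (simp_all add: field_simps power2_eq_square power4_eq_xxxx)
    show ?entries using eq4[OF h4(1)] eq4[OF h4(2)] eq4[OF h4(3)] eq4[OF h4(4)] pos by simp
  next
    assume ?entries
    moreover have
      "(sqrt y1 * sqrt y2 * p) * (sqrt y1 / sqrt y2 * q) / ((sqrt y2 / sqrt y1 * q) * (p / (sqrt y1 * sqrt y2))) = y1^2"
      "(sqrt y1 * sqrt y2 * p) * (sqrt y2 / sqrt y1 * q) / ((sqrt y1 / sqrt y2 * q) * (p / (sqrt y1 * sqrt y2))) = y2^2"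
      "(sqrt y1 * sqrt y2 * p) * (p / (sqrt y1 * sqrt y2)) = p^2"
      "(sqrt y1 / sqrt y2 * q) * (sqrt y2 / sqrt y1 * q) = q^2"
      using pos by (simp_all add: field_simps power2_eq_square)
    ultimately show ?rhs using pos by (metis real_sqrt_abs abs_of_pos)
  qed
  finally show ?thesis .
qed

lemma cosh_sinh_ln_sqrt_add_sqrt:
  fixes P Q :: real
  assumes "Q > 0" "P - Q = 1"
  shows "cosh (ln (sqrt P + sqrt Q)) = sqrt P" "sinh (ln (sqrt P + sqrt Q)) = sqrt Q"
    "ln (sqrt P + sqrt Q) > 0"
proof -
  have "sqrt P > 1" using assms by simp
  moreover have "sqrt Q > 0" using assms by simp
  ultimately have pos: "sqrt P + sqrt Q > 1" by linarith
  have "(sqrt P + sqrt Q) * (sqrt P - sqrt Q) = 1"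
    using assms by (simp add: algebra_simps flip: power2_eq_square)
  then have "inverse (sqrt P + sqrt Q) = sqrt P - sqrt Q" using pos by (simp add: field_simps)
  then show "cosh (ln (sqrt P + sqrt Q)) = sqrt P" "sinh (ln (sqrt P + sqrt Q)) = sqrt Q"
    using pos by (simp_all add: cosh_ln_real sinh_ln_real)
  show "ln (sqrt P + sqrt Q) > 0" using pos by simp
qed

lemma cosh_sinh_ln_sqrt_abs:
  fixes x y :: real
  assumes "x - y = 1" "0 < x*y"
  defines "v \<equiv> ln (sqrt \<bar>x\<bar> + sqrt \<bar>y\<bar>)"
  shows "v > 0 \<and> (sqrt \<bar>x\<bar>, sqrt \<bar>y\<bar>) = (if 0 < x then (cosh v, sinh v) else (sinh v, cosh v))"
proof (cases "0 < x")
  case True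
  then have "\<bar>x\<bar> - \<bar>y\<bar> = 1" "\<bar>y\<bar> > 0" using assms(1,2) by (auto simp: zero_less_mult_iff)
  from cosh_sinh_ln_sqrt_add_sqrt[OF this(2,1)] show ?thesis using True by (simp add: v_def)
next
  case False
  then have "\<bar>y\<bar> - \<bar>x\<bar> = 1" "\<bar>x\<bar> > 0" using assms(1,2) by (auto simp: zero_less_mult_iff)
  from cosh_sinh_ln_sqrt_add_sqrt[OF this(2,1)] show ?thesis using False by (simp add: v_def add.commute)
qed

lemma sign_exponents:
  fixes a b c d :: real
  assumes "0 < a*b*c*d"
  defines "\<delta>1 \<equiv> if sgn c = sgn a then 0 else 1 :: nat" and "\<delta>2 \<equiv> if sgn b = sgn a then 0 else 1 :: nat"
  shows "sgn c * (-1)^\<delta>1 = sgn a" "sgn c * (-1)^(\<delta>1+\<delta>2) = sgn b" "sgn c * (-1)^\<delta>2 = sgn d"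
    and "\<delta>1 = \<delta>2 \<longleftrightarrow> 0 < a*d"
proof -
  have nz: "a \<noteq> 0" "b \<noteq> 0" "c \<noteq> 0" "d \<noteq> 0" using assms(1) by auto
  have "sgn a * sgn b * sgn c * sgn d = 1" using assms(1) by (simp flip: sgn_mult)
  then have "sgn d = sgn a * sgn b * sgn c" using nz by (auto simp: sgn_if split: if_splits)
  then show "sgn c * (-1)^\<delta>1 = sgn a" "sgn c * (-1)^(\<delta>1+\<delta>2) = sgn b" "sgn c * (-1)^\<delta>2 = sgn d"
    using nz by (auto simp: \<delta>1_def \<delta>2_def sgn_if)
  have "0 < (a*d) * (b*c)" using assms(1) by (simp add: ac_simps)
  then have "0 < a*d \<longleftrightarrow> 0 < b*c" unfolding zero_less_mult_iff[of "a*d"] by auto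
  also have "\<dots> \<longleftrightarrow> \<delta>1 = \<delta>2" using nz by (auto simp: \<delta>1_def \<delta>2_def sgn_if zero_less_mult_iff)
  finally show "\<delta>1 = \<delta>2 \<longleftrightarrow> 0 < a*d" ..
qed

text \<open>The overall sign is \<open>sgn c\<close> because the lower left entry of
  \<open>omega_pow \<delta>1 ** hyp_rot v ** omega_pow \<delta>2\<close> is always positive.\<close>

definition decomp_params ::
    "real \<Rightarrow> real \<Rightarrow> real \<Rightarrow> real \<Rightarrow> real \<times> real \<times> nat \<times> nat \<times> real \<times> real" where
  "decomp_params a b c d =
    (sqrt \<bar>a*b/(c*d)\<bar>, sqrt \<bar>a*c/(b*d)\<bar>,
     if sgn c = sgn a then 0 else 1, if sgn b = sgn a then 0 else 1,
     ln (sqrt \<bar>a*d\<bar> + sqrt \<bar>c*b\<bar>), sgn c)"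

lemma decomp_params_unique:
  assumes "decomp (mk2 a b c d) y1 y2 \<delta>1 \<delta>2 v \<sigma>"
  shows "(y1, y2, \<delta>1, \<delta>2, v, \<sigma>) = decomp_params a b c d"
proof -
  have y: "y1 > 0" "y2 > 0" and \<delta>: "\<delta>1 \<in> {0,1}" "\<delta>2 \<in> {0,1}" and "v > 0" and \<sigma>: "\<sigma> \<in> {1,-1}"
    and g: "mk2 a b c d = \<sigma> *\<^sub>R (diag_y y1 ** omega_pow \<delta>1 ** hyp_rot v ** omega_pow \<delta>2 ** diag_y y2)"
    using assms by (auto simp: decomp_def)
  obtain p q where pq: "(p, q) = (if \<delta>1 = \<delta>2 then (cosh v, sinh v) else (sinh v, cosh v))"
    by (metis prod.collapse)
  have pq_pos: "p > 0" "q > 0" and "p + q = exp v"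
    using pq \<open>v > 0\<close> by (auto split: if_splits simp: cosh_plus_sinh add.commute[of "sinh v"])
  obtain A B C D where ABCD: "diag_y y1 ** mk2 p q q p ** diag_y y2 = mk2 A B C D"
    and "A > 0" "B > 0" "C > 0" "D > 0"
    using diag_y_conj[OF y] y pq_pos by fastforce
  have entries: "a = \<sigma> * (-1)^\<delta>1 * A" "b = \<sigma> * (-1)^(\<delta>1+\<delta>2) * B" "c = \<sigma> * C" "d = \<sigma> * (-1)^\<delta>2 * D"
    using g decomp_product[OF y \<delta> pq ABCD] by simp_all
  then have "\<bar>a\<bar> = A" "\<bar>b\<bar> = B" "\<bar>c\<bar> = C" "\<bar>d\<bar> = D"
    using \<sigma> \<open>A > 0\<close> \<open>B > 0\<close> \<open>C > 0\<close> \<open>D > 0\<close> by (auto simp: abs_mult power_abs)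
  then have "y1 = sqrt \<bar>a*b/(c*d)\<bar> \<and> y2 = sqrt \<bar>a*c/(b*d)\<bar> \<and> p = sqrt \<bar>a*d\<bar> \<and> q = sqrt \<bar>c*b\<bar>"
    using diag_conj_eq_iff[of "\<bar>a\<bar>" "\<bar>b\<bar>" "\<bar>c\<bar>" "\<bar>d\<bar>" y1 y2 p q] ABCD y pq_pos
      \<open>A > 0\<close> \<open>B > 0\<close> \<open>C > 0\<close> \<open>D > 0\<close>
    by (simp add: abs_mult abs_divide mult.commute[of "\<bar>c\<bar>"])
  moreover have "sgn a = \<sigma> * (-1)^\<delta>1" "sgn b = \<sigma> * (-1)^\<delta>1 * (-1)^\<delta>2" "sgn c = \<sigma>"
    using entries \<sigma> \<open>A > 0\<close> \<open>B > 0\<close> \<open>C > 0\<close> by (auto simp: sgn_mult power_add)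
  then have "\<delta>1 = (if sgn c = sgn a then 0 else 1)" "\<delta>2 = (if sgn b = sgn a then 0 else 1)" "\<sigma> = sgn c"
    using \<delta> \<sigma> by auto
  moreover have "v = ln (p + q)" using \<open>p + q = exp v\<close> by simp
  ultimately show ?thesis by (simp add: decomp_params_def)
qed

lemma decomp_decomp_params:
  assumes det: "a*d - b*c = 1" and pos: "0 < a*b*c*d"
  shows "case decomp_params a b c d of (y1, y2, \<delta>1, \<delta>2, v, \<sigma>) \<Rightarrow> decomp (mk2 a b c d) y1 y2 \<delta>1 \<delta>2 v \<sigma>"
proof -
  define y1 y2 where "y1 = sqrt \<bar>a*b/(c*d)\<bar>" and "y2 = sqrt \<bar>a*c/(b*d)\<bar>"
  define \<delta>1 \<delta>2 :: nat where "\<delta>1 = (if sgn c = sgn a then 0 else 1)" and "\<delta>2 = (if sgn b = sgn a then 0 else 1)"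
  define P Q where "P = sqrt \<bar>a*d\<bar>" and "Q = sqrt \<bar>c*b\<bar>"
  define v where "v = ln (P + Q)"
  have nz: "a \<noteq> 0" "b \<noteq> 0" "c \<noteq> 0" "d \<noteq> 0" using pos by auto
  have y: "y1 > 0" "y2 > 0" using nz by (simp_all add: y1_def y2_def)
  have \<delta>: "\<delta>1 \<in> {0,1}" "\<delta>2 \<in> {0,1}" by (simp_all add: \<delta>1_def \<delta>2_def)
  note signs = sign_exponents[OF pos, folded \<delta>1_def \<delta>2_def]
  have "0 < (a*d) * (b*c)" using pos by (simp add: ac_simps)
  from cosh_sinh_ln_sqrt_abs[OF det this]
  have pq: "(P, Q) = (if \<delta>1 = \<delta>2 then (cosh v, sinh v) else (sinh v, cosh v))" and "v > 0"
    by (simp_all add: signs(4) P_def Q_def v_def mult.commute[of c])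
  have "diag_y y1 ** mk2 P Q Q P ** diag_y y2 = mk2 (\<bar>a\<bar>) (\<bar>b\<bar>) (\<bar>c\<bar>) (\<bar>d\<bar>)"
    using diag_conj_eq_iff[of "\<bar>a\<bar>" "\<bar>b\<bar>" "\<bar>c\<bar>" "\<bar>d\<bar>" y1 y2 P Q] nz y
    by (simp add: y1_def y2_def P_def Q_def abs_mult mult.commute[of "\<bar>c\<bar>"])
  from decomp_product[OF y \<delta> pq this, of "sgn c"]
  have "mk2 a b c d = sgn c *\<^sub>R (diag_y y1 ** omega_pow \<delta>1 ** hyp_rot v ** omega_pow \<delta>2 ** diag_y y2)"
    by (simp only: signs(1-3) sgn_mult_abs mult_1_right)
  moreover have "sgn c \<in> {1, -1}" using nz by (simp add: sgn_if)
  ultimately show ?thesis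
    using y \<delta> \<open>v > 0\<close>
    by (simp add: decomp_params_def decomp_def y1_def y2_def \<delta>1_def \<delta>2_def v_def P_def Q_def)
qed

theorem lemma4p3:
  fixes g :: mat2
  defines "a \<equiv> ent_a g" and "b \<equiv> ent_b g" and "c \<equiv> ent_c g" and "d \<equiv> ent_d g"
  assumes "g \<in> SL2R" and "g \<notin> small_s"
  shows "(g \<in> big_S \<longleftrightarrow> \<bar>a * d\<bar> + \<bar>b * c\<bar> = 1)
    \<and> (g \<notin> big_S \<longrightarrow>
         (\<exists>!p. case p of (y1, y2, \<delta>1, \<delta>2, v, \<sigma>) \<Rightarrow> decomp g y1 y2 \<delta>1 \<delta>2 v \<sigma>)
       \<and> (\<forall>y1 y2 \<delta>1 \<delta>2 v \<sigma>. decomp g y1 y2 \<delta>1 \<delta>2 v \<sigma> \<longrightarrow>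
            y1 = sqrt \<bar>a * b / (c * d)\<bar>
          \<and> y2 = sqrt \<bar>a * c / (b * d)\<bar>
          \<and> v = ln (sqrt \<bar>a * d\<bar> + sqrt \<bar>c * b\<bar>)
          \<and> ((sgn b = sgn a \<and> sgn c = sgn a \<and> sgn d = sgn a) \<longrightarrow> (\<delta>1, \<delta>2) = (0, 0))
          \<and> ((sgn b = - sgn a \<and> sgn c = - sgn a \<and> sgn d = sgn a) \<longrightarrow> (\<delta>1, \<delta>2) = (1, 1))
          \<and> ((sgn b = sgn a \<and> sgn c = - sgn a \<and> sgn d = - sgn a) \<longrightarrow> (\<delta>1, \<delta>2) = (1, 0))
          \<and> ((sgn b = - sgn a \<and> sgn c = sgn a \<and> sgn d = - sgn a) \<longrightarrow> (\<delta>1, \<delta>2) = (0, 1))))"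
proof -
  have g: "g = mk2 a b c d" unfolding a_def b_def c_def d_def by (rule mk2_ent)
  have nz: "a \<noteq> 0" "b \<noteq> 0" "c \<noteq> 0" "d \<noteq> 0"
    using assms(5,6) by (auto simp: small_s_iff a_def b_def c_def d_def)
  have det: "a*d - b*c = 1" using assms(5) by (simp add: SL2R_def g det_mk2)
  have S: "g \<in> big_S \<longleftrightarrow> 0 < a*d \<and> b*c < 0"
    using big_S_iff[OF assms(5,6)] by (simp add: a_def b_def c_def d_def)
  have in_S: "g \<in> big_S \<longleftrightarrow> \<bar>a * d\<bar> + \<bar>b * c\<bar> = 1"
    using S abs_add_abs_eq_diff_iff[of "a*d" "b*c"] det nz by (auto simp: order_le_less)
  have unique: "(y1, y2, \<delta>1, \<delta>2, v, \<sigma>) = decomp_params a b c d"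
    if "decomp g y1 y2 \<delta>1 \<delta>2 v \<sigma>" for y1 y2 \<delta>1 \<delta>2 v \<sigma>
    using decomp_params_unique that g by simp
  have "\<exists>!p. case p of (y1, y2, \<delta>1, \<delta>2, v, \<sigma>) \<Rightarrow> decomp g y1 y2 \<delta>1 \<delta>2 v \<sigma>"
    if "g \<notin> big_S"
  proof (rule ex1I[of _ "decomp_params a b c d"])
    have "0 < x*y" if "x - y = 1" "x \<noteq> 0" "y \<noteq> 0" "\<not> (0 < x \<and> y < 0)" for x y :: real
      using that by (auto simp: zero_less_mult_iff)
    from this[of "a*d" "b*c"] have "0 < (a*d) * (b*c)" using that S det nz by simp
    then show "case decomp_params a b c d of (y1, y2, \<delta>1, \<delta>2, v, \<sigma>) \<Rightarrow> decomp g y1 y2 \<delta>1 \<delta>2 v \<sigma>"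
      using decomp_decomp_params[OF det] g by (simp add: ac_simps)
  qed (use unique in auto)
  then show ?thesis
    using in_S nz by (auto dest!: unique simp: decomp_params_def sgn_eq_0_iff)
qed

end
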